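(* Let $p$ be a prime and $b$ an integer with $0<b\le b^{-1}<p$. Write $p=bq+r$ with $0\le r<b$ and $p=b^{-1}s+t$ with $0\le t<b^{-1}$ (division algorithm). Then $\mathrm{inv}_{1,b}$ contains $$\{x_1^{p-kb}x_2^k\mid 0\le k\le q\}\cup\{x_1^mx_2^{p-mb^{-1}}\mid 0\le m\le s\}.$$
   Context: Let $S=\mathbb{C}[x_1,x_2]$, $\zeta=e^{2\pi i/p}$, $G=\mathbb{Z}/p\mathbb{Z}=\langle\zeta\rangle$ acting on $S$ by $x_1\mapsto\zeta x_1$, $x_2\mapsto\zeta^bx_2$. $S^G_{1,b}$ is the invariant ring; a monomial $x_1^cx_2^d$ lies in it iff $c+bd\equiv0\pmod p$. $\mathrm{inv}_{1,b}$ denotes the minimal set of monomial generators of $S^G_{1,b}$ as a $\mathbb{C}$-algebra: the nonconstant invariant monomials that are not a product of two nonconstant invariant monomials. $b^{-1}$ is the unique integer $0<b^{-1}<p$ with $bb^{-1}\equiv1\pmod p$. *)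

theory Defs
  imports "HOL-Computational_Algebra.Primes"
begin

text \<open>A monomial x1^c x2^d of C[x1,x2] is represented by its exponent pair (c,d).
  The product of monomials corresponds to adding exponent pairs; (0,0) is the constant 1.\<close>

definition is_invariant :: "nat \<Rightarrow> nat \<Rightarrow> nat \<times> nat \<Rightarrow> bool" where
  "is_invariant p b m \<longleftrightarrow> (fst m + b * snd m) mod p = 0"

definition nonconst :: "nat \<times> nat \<Rightarrow> bool" where
  "nonconst m \<longleftrightarrow> m \<noteq> (0, 0)"

definition inv_gens :: "nat \<Rightarrow> nat \<Rightarrow> (nat \<times> nat) set" where
  "inv_gens p b = {m. nonconst m \<and> is_invariant p b m \<and>
     \<not> (\<exists>m1 m2. nonconst m1 \<and> nonconst m2 \<and> is_invariant p b m1 \<and> is_invariant p b m2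
              \<and> m = (fst m1 + fst m2, snd m1 + snd m2))}"

definition binv :: "nat \<Rightarrow> nat \<Rightarrow> nat" where
  "binv p b = (THE x. 0 < x \<and> x < p \<and> (b * x) mod p = 1 mod p)"

end

theory Submission
  imports Defs "HOL-Number_Theory.Cong"
begin

text \<open>Both families consist of monomials of weight exactly p for a linear weight
  u c + v d of x1^c x2^d with u b = v (mod p): (u, v) = (1, b) for the first family
  and (u, v) = (b^{-1}, 1) for the second. Modulo p such a weight is u (c + b d)
  with u a unit, so every nonconstant invariant monomial has weight
  a positive multiple of p. A monomial of weight p is therefore invariant, and it
  cannot be a product of two nonconstant invariant monomials, whose weights would
  add up to at least 2p.\<close>

lemma binv_cong:
  fixes p b :: nat
  assumes "1 < p" and "coprime b p"
  shows "0 < binv p b" and "[b * binv p b = 1] (mod p)"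
proof -
  obtain x where x: "x < p" "[b * x = 1] (mod p)"
    using assms coprime_iff_invertible'_nat[of p b] by auto
  have "0 < x"
  proof (rule ccontr)
    assume "\<not> 0 < x"
    then show False
      using x(2) assms(1) by (simp add: cong_def)
  qed
  have unique: "z = x" if "0 < z \<and> z < p \<and> (b * z) mod p = 1 mod p" for z
  proof -
    have "[b * z = b * x] (mod p)"
      using that x(2) by (simp add: cong_def)
    then have "[z = x] (mod p)"
      using cong_mult_lcancel_nat assms(2) by blast
    then show ?thesis
      using that x(1) cong_less_modulus_unique_nat by blast
  qed
  have "binv p b = x"
    unfolding binv_def
  proof (rule the_equality)
    show "0 < x \<and> x < p \<and> (b * x) mod p = 1 mod p"
      using \<open>0 < x\<close> x by (simp add: cong_def)
  qed (rule unique)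
  then show "0 < binv p b" "[b * binv p b = 1] (mod p)"
    using \<open>0 < x\<close> x by auto
qed

lemma weight_cong_character:
  fixes p b u v c d :: nat
  assumes "[u * b = v] (mod p)"
  shows "[u * (c + b * d) = u * c + v * d] (mod p)"
proof -
  have "[u * c + (u * b) * d = u * c + v * d] (mod p)"
    using assms by (intro cong_add cong_mult cong_refl)
  then show ?thesis
    by (simp add: algebra_simps)
qed

lemma is_invariant_iff_dvd_weight:
  fixes p b u v :: nat
  assumes "coprime u p" and "[u * b = v] (mod p)"
  shows "is_invariant p b m \<longleftrightarrow> p dvd u * fst m + v * snd m"
proof -
  have "p dvd u * fst m + v * snd m \<longleftrightarrow> p dvd u * (fst m + b * snd m)"
    using weight_cong_character[OF assms(2)] cong_dvd_iff by blast
  also have "\<dots> \<longleftrightarrow> p dvd fst m + b * snd m"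
    using assms(1) by (simp add: coprime_dvd_mult_right_iff coprime_commute)
  finally show ?thesis
    by (simp add: is_invariant_def dvd_eq_mod_eq_0)
qed

lemma weight_ge_if_invariant:
  fixes p b u v :: nat
  assumes "0 < u" "0 < v" "coprime u p" "[u * b = v] (mod p)"
    and "nonconst m" "is_invariant p b m"
  shows "p \<le> u * fst m + v * snd m"
proof (rule dvd_imp_le)
  show "p dvd u * fst m + v * snd m"
    using assms is_invariant_iff_dvd_weight by blast
  show "0 < u * fst m + v * snd m"
    using assms(1,2,5) by (auto simp: nonconst_def prod_eq_iff)
qed

lemma in_inv_gens_if_weight_eq:
  fixes p b u v :: nat
  assumes "0 < p" "0 < u" "0 < v" "coprime u p" "[u * b = v] (mod p)"
    and weight: "u * fst m + v * snd m = p"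
  shows "m \<in> inv_gens p b"
proof -
  have "nonconst m"
    using weight \<open>0 < p\<close> by (auto simp: nonconst_def)
  moreover have "is_invariant p b m"
    using weight is_invariant_iff_dvd_weight[OF assms(4,5)] by simp
  moreover have False
    if "nonconst m1" "nonconst m2" "is_invariant p b m1" "is_invariant p b m2"
      and m: "m = (fst m1 + fst m2, snd m1 + snd m2)" for m1 m2
  proof -
    have "p \<le> u * fst m1 + v * snd m1" "p \<le> u * fst m2 + v * snd m2"
      using that weight_ge_if_invariant[OF assms(2-5)] by auto
    moreover have "u * fst m + v * snd m = (u * fst m1 + v * snd m1) + (u * fst m2 + v * snd m2)"
      using m by (simp add: algebra_simps)
    ultimately show False
      using weight \<open>0 < p\<close> by linarith
  qed
  ultimately show ?thesis
    unfolding inv_gens_def by blast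
qed

theorem lemma3p7:
  fixes p b :: nat
  assumes "prime p" and "0 < b" and "b \<le> binv p b" and "binv p b < p"
  shows "{(p - k * b, k) | k. k \<le> p div b}
           \<union> {(m, p - m * binv p b) | m. m \<le> p div binv p b}
         \<subseteq> inv_gens p b"
proof -
  have "1 < p"
    using assms(1) prime_gt_1_nat by blast
  have "b < p"
    using assms(3,4) by linarith
  then have "coprime b p"
    using assms(1,2) by (metis coprime_commute dvd_imp_le not_le prime_imp_coprime_nat)
  then have binv: "0 < binv p b" "[binv p b * b = 1] (mod p)"
    using binv_cong[OF \<open>1 < p\<close>] by (auto simp: mult.commute)
  have "coprime (binv p b) p"
    using binv(2) coprime_iff_invertible_nat by auto
  have "(p - k * b, k) \<in> inv_gens p b" if "k \<le> p div b" for k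
    using \<open>1 < p\<close> \<open>0 < b\<close> that
    by (intro in_inv_gens_if_weight_eq[where u = 1 and v = b])
      (auto simp: less_eq_div_iff_mult_less_eq)
  moreover have "(i, p - i * binv p b) \<in> inv_gens p b" if "i \<le> p div binv p b" for i
    using \<open>1 < p\<close> binv \<open>coprime (binv p b) p\<close> that
    by (intro in_inv_gens_if_weight_eq[where u = "binv p b" and v = 1])
      (auto simp: less_eq_div_iff_mult_less_eq mult.commute)
  ultimately show ?thesis
    by blast
qed

end
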